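(* For every positive integer $n$, the Wiener indices of the polyphenyl ortho-chain $\overline{O}_n$, the polyphenyl meta-chain $\overline{M}_n$ and the polyphenyl para-chain $\overline{P}_n$ are $$W(\overline{O}_n)=12n^3+36n^2-21n,\quad W(\overline{M}_n)=18n^3+18n^2-9n,\quad W(\overline{P}_n)=24n^3+3n.$$
   Context: The Wiener index is $W(G)=\sum_{\{u,v\}\subseteq V(G)}d_G(u,v)$, $d_G$ the shortest-path distance. A polyphenyl hexagonal chain $\overline{G}_n=\overline{H}_0\cdots\overline{H}_{n-1}$ of length $n$ consists of pairwise vertex-disjoint hexagons $\overline{H}_0,\dots,\overline{H}_{n-1}$ together with cut-edges: $\overline{G}_1=\overline{H}_0$, and for $k\ge1$, $\overline{G}_{k+1}$ is obtained from $\overline{G}_k$ by adding $\overline{H}_k$ and a cut-edge joining a vertex $c_k$ of $\overline{H}_k$ to a vertex $t_k$ of $\overline{H}_{k-1}$, where for $k\ge2$, $t_k\ne c_{k-1}$. For $k\ge1$, vertices of $\overline{H}_k$ at distance $1,2,3$ from $c_k$ are denoted $o_k,m_k,p_k$ (ortho, meta, para). The polyphenyl ortho-chain $\overline{O}_n$ has $t_k=o_{k-1}$ for all $2\le k\le n-1$; the polyphenyl meta-chain $\overline{M}_n$ has $t_k=m_{k-1}$ and the polyphenyl para-chain $\overline{P}_n$ has $t_k=p_{k-1}$ for all $2\le k\le n-1$ (vacuous for $n\le2$). *)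

theory Defs
  imports Main
begin

text \<open>Vertex v < 6*n lies in hexagon H_(v div 6) at cyclic position v mod 6
  (positions 0..5 in cyclic order around the hexagon).
  For 1 <= k < n, c k is the position of c_k in H_k and t k is the position
  of t_k in H_(k-1); the cut-edge joins 6*(k-1) + t k and 6*k + c k.\<close>

definition hex_vertices :: "nat \<Rightarrow> nat set" where
  "hex_vertices n = {..<6*n}"

definition chain_adj :: "nat \<Rightarrow> (nat \<Rightarrow> nat) \<Rightarrow> (nat \<Rightarrow> nat) \<Rightarrow> nat \<Rightarrow> nat \<Rightarrow> bool" where
  "chain_adj n c t u v \<longleftrightarrow> u < 6*n \<and> v < 6*n \<and>
     ((u div 6 = v div 6 \<and> (u mod 6 = Suc (v mod 6) mod 6 \<or> v mod 6 = Suc (u mod 6) mod 6))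
      \<or> (\<exists>k. 1 \<le> k \<and> k < n \<and> {u, v} = {6*(k-1) + t k, 6*k + c k}))"

definition is_walk :: "('a \<Rightarrow> 'a \<Rightarrow> bool) \<Rightarrow> 'a list \<Rightarrow> 'a \<Rightarrow> 'a \<Rightarrow> bool" where
  "is_walk adj p u v \<longleftrightarrow> p \<noteq> [] \<and> hd p = u \<and> last p = v \<and>
     (\<forall>i. Suc i < length p \<longrightarrow> adj (p ! i) (p ! Suc i))"

definition graph_dist :: "('a \<Rightarrow> 'a \<Rightarrow> bool) \<Rightarrow> 'a \<Rightarrow> 'a \<Rightarrow> nat" where
  "graph_dist adj u v = (LEAST m. \<exists>p. is_walk adj p u v \<and> length p = Suc m)"

definition wiener :: "nat \<Rightarrow> (nat \<Rightarrow> nat) \<Rightarrow> (nat \<Rightarrow> nat) \<Rightarrow> nat" where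
  "wiener n c t = (\<Sum>(u, v) \<in> {(u, v). u < v \<and> v < 6*n}. graph_dist (chain_adj n c t) u v)"

definition hex_pos_dist :: "nat \<Rightarrow> nat \<Rightarrow> nat" where
  "hex_pos_dist i j = min ((i + 6 - j) mod 6) ((j + 6 - i) mod 6)"

definition valid_chain :: "nat \<Rightarrow> (nat \<Rightarrow> nat) \<Rightarrow> (nat \<Rightarrow> nat) \<Rightarrow> bool" where
  "valid_chain n c t \<longleftrightarrow> (\<forall>k. 1 \<le> k \<and> k < n \<longrightarrow> c k < 6 \<and> t k < 6) \<and>
     (\<forall>k. 2 \<le> k \<and> k < n \<longrightarrow> t k \<noteq> c (k-1))"

text \<open>t_k is at hexagon distance d from c_(k-1) for all 2 <= k <= n-1
  (d = 1 ortho, d = 2 meta, d = 3 para).\<close>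

definition chain_type :: "nat \<Rightarrow> nat \<Rightarrow> (nat \<Rightarrow> nat) \<Rightarrow> (nat \<Rightarrow> nat) \<Rightarrow> bool" where
  "chain_type d n c t \<longleftrightarrow> (\<forall>k. 2 \<le> k \<and> k < n \<longrightarrow> hex_pos_dist (t k) (c (k-1)) = d)"

end

theory Submission
  imports Defs
begin

text \<open>
  In a polyphenyl chain every cut-edge is a bridge, so a shortest path between vertices of
  hexagons \<open>H\<^sub>a\<close> and \<open>H\<^sub>b\<close> (\<open>a < b\<close>) crosses the cut-edges joining them in order and runs
  along a shortest arc inside every hexagon in between; this gives an explicit distance
  function, which is identified with the graph distance by checking that it is
  1-Lipschitz along edges and decreases by one along some edge into every other vertex.

  Summing, the Wiener index \<open>W\<^sub>m\<close> of the first \<open>m\<close> hexagons satisfies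
  \<open>W\<^sub>m\<^sub>+\<^sub>1 = W\<^sub>m + 6 Y\<^sub>m + 90 m + 27\<close>, where \<open>Y\<^sub>m\<close> is the total distance from the attaching
  vertex \<open>t\<^sub>m\<close> to the first \<open>m\<close> hexagons, and \<open>Y\<^sub>m\<^sub>+\<^sub>1 = Y\<^sub>m + 6 m (1 + d) + 9\<close> when
  \<open>t\<^sub>m\<^sub>+\<^sub>1\<close> is at hexagon distance \<open>d\<close> from \<open>c\<^sub>m\<close>. Solving the recurrences gives
  \<open>W\<^sub>n = 27 n + 72 n (n - 1) + 6 (d + 1) n (n - 1) (n - 2)\<close>, which specialises to the three
  formulas for \<open>d = 1, 2, 3\<close>.
\<close>

section \<open>Distances on a hexagon\<close>


definition hex_adj :: "nat \<Rightarrow> nat \<Rightarrow> bool" where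
  "hex_adj i j \<longleftrightarrow> i = Suc j mod 6 \<or> j = Suc i mod 6"

lemma less_six_cases: "(x::nat) < 6 \<Longrightarrow> x = 0 \<or> x = 1 \<or> x = 2 \<or> x = 3 \<or> x = 4 \<or> x = 5"
  by auto

lemma hex_pos_dist_sym: "hex_pos_dist i j = hex_pos_dist j i"
  by (simp add: hex_pos_dist_def min.commute)

lemma hex_pos_dist_self [simp]: "hex_pos_dist i i = 0"
  by (simp add: hex_pos_dist_def)

lemma hex_pos_dist_eq_0D: "x < 6 \<Longrightarrow> y < 6 \<Longrightarrow> hex_pos_dist x y = 0 \<Longrightarrow> x = y"
  using less_six_cases[of x] less_six_cases[of y] by (auto simp: hex_pos_dist_def)

lemma hex_pos_dist_adj_le:
  assumes "x < 6" "y < 6" "z < 6" "hex_adj y z"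
  shows "hex_pos_dist x z \<le> Suc (hex_pos_dist x y)"
  using less_six_cases[OF assms(1)] less_six_cases[OF assms(2)] less_six_cases[OF assms(3)] assms(4)
  by (elim disjE) (simp_all add: hex_pos_dist_def hex_adj_def)

lemma hex_pos_dist_pred:
  assumes "x < 6" "y < 6" "x \<noteq> y"
  shows "\<exists>z<6. hex_adj z y \<and> Suc (hex_pos_dist x z) = hex_pos_dist x y"
proof (intro exI conjI)
  \<comment> \<open>the neighbour of \<open>y\<close> on a shortest arc towards \<open>x\<close>\<close>
  let ?z = "if (y + 6 - x) mod 6 \<le> 3 then (y + 5) mod 6 else Suc y mod 6"
  show "?z < 6" by simp
  show "hex_adj ?z y" "Suc (hex_pos_dist x ?z) = hex_pos_dist x y"
    using less_six_cases[OF assms(1)] less_six_cases[OF assms(2)] assms(3)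
    by (elim disjE; simp add: hex_pos_dist_def hex_adj_def)+
qed

lemma sum_hex_pos_dist: "x < 6 \<Longrightarrow> (\<Sum>y<6. hex_pos_dist x y) = 9"
  using less_six_cases[of x] by (auto simp: hex_pos_dist_def lessThan_nat_numeral)

lemma sum_hex_pos_dist_pairs: "(\<Sum>y<6. \<Sum>x<y. hex_pos_dist x y) = 27"
  by (simp add: hex_pos_dist_def lessThan_nat_numeral)

section \<open>Walks and graph distance\<close>

lemma is_walk_snoc: "is_walk adj p u y \<Longrightarrow> adj y v \<Longrightarrow> is_walk adj (p @ [v]) u v"
  by (auto simp: is_walk_def nth_append last_conv_nth less_Suc_eq) (metis diff_Suc_1')

lemma is_walk_length_gt:
  fixes f :: "'a \<Rightarrow> nat"
  assumes walk: "is_walk adj p u v" and "f u = 0"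
    and lipschitz: "\<And>x y. adj x y \<Longrightarrow> f y \<le> Suc (f x)"
  shows "f v < length p"
proof -
  have "f (p ! i) \<le> i" if "i < length p" for i
    using that
  proof (induction i)
    case 0
    then show ?case using walk \<open>f u = 0\<close> by (simp add: is_walk_def hd_conv_nth)
  next
    case (Suc i)
    then have "adj (p ! i) (p ! Suc i)" using walk by (simp add: is_walk_def)
    then show ?case using Suc lipschitz by fastforce
  qed
  moreover have "p \<noteq> []" "v = p ! (length p - 1)" using walk by (auto simp: is_walk_def last_conv_nth)
  ultimately show ?thesis by (metis diff_less le_less_trans length_greater_0_conv zero_less_one)
qed

lemma graph_dist_eqI:
  fixes f :: "'a \<Rightarrow> nat"
  assumes "f u = 0"
    and zero: "\<And>v. v \<in> V \<Longrightarrow> f v = 0 \<Longrightarrow> v = u"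
    and lipschitz: "\<And>x y. adj x y \<Longrightarrow> f y \<le> Suc (f x)"
    and pred: "\<And>v. v \<in> V \<Longrightarrow> 0 < f v \<Longrightarrow> \<exists>x\<in>V. adj x v \<and> Suc (f x) = f v"
    and "v \<in> V"
  shows "graph_dist adj u v = f v"
  unfolding graph_dist_def
proof (rule Least_equality)
  show "\<exists>p. is_walk adj p u v \<and> length p = Suc (f v)"
    using \<open>v \<in> V\<close>
  proof (induction "f v" arbitrary: v)
    case 0
    then show ?case using zero by (intro exI[of _ "[u]"]) (auto simp: is_walk_def)
  next
    case (Suc m)
    then obtain x where "x \<in> V" "adj x v" "Suc (f x) = f v" using pred by fastforce
    moreover obtain p where "is_walk adj p u x" "length p = Suc (f x)"
      using Suc.hyps(1)[of x] \<open>x \<in> V\<close> \<open>Suc (f x) = f v\<close> Suc.hyps(2) by auto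
    ultimately show ?case by (intro exI[of _ "p @ [v]"]) (auto intro: is_walk_snoc)
  qed
next
  show "f v \<le> m" if "\<exists>p. is_walk adj p u v \<and> length p = Suc m" for m
    using that is_walk_length_gt[of adj _ u v f] \<open>f u = 0\<close> lipschitz by fastforce
qed

section \<open>Distances in a polyphenyl chain\<close>

lemma chain_adj_iff:
  "chain_adj n c t u v \<longleftrightarrow> u < 6*n \<and> v < 6*n \<and>
     (u div 6 = v div 6 \<and> hex_adj (u mod 6) (v mod 6)
      \<or> (\<exists>k. 1 \<le> k \<and> k < n \<and> {u, v} = {6*(k-1) + t k, 6*k + c k}))"
  by (simp add: chain_adj_def hex_adj_def)

lemma chain_adj_in_hex:
  "b < n \<Longrightarrow> z < 6 \<Longrightarrow> w < 6 \<Longrightarrow> hex_adj z w \<Longrightarrow> chain_adj n c t (6*b + z) (6*b + w)"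
  by (simp add: chain_adj_iff)

lemma chain_adj_cut:
  assumes "1 \<le> k" "k < n" "t k < 6" "c k < 6"
  shows "chain_adj n c t (6*(k-1) + t k) (6*k + c k)" "chain_adj n c t (6*k + c k) (6*(k-1) + t k)"
  using assms by (auto simp: chain_adj_iff insert_commute)

lemma valid_chain_less_6:
  assumes "valid_chain n c t" "1 \<le> k" "k < n"
  shows "c k < 6" "t k < 6"
  using assms by (auto simp: valid_chain_def)

text \<open>\<open>hex_chain_dist c t a x b y\<close> is the length of the path from position \<open>x\<close> of \<open>H\<^sub>a\<close>
  to position \<open>y\<close> of \<open>H\<^sub>b\<close> that leaves each \<open>H\<^sub>k\<^sub>-\<^sub>1\<close> at \<open>t\<^sub>k\<close> and enters \<open>H\<^sub>k\<close> at \<open>c\<^sub>k\<close>;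
  it is only meaningful for \<open>a \<le> b\<close>.\<close>

primrec hex_chain_dist :: "(nat \<Rightarrow> nat) \<Rightarrow> (nat \<Rightarrow> nat) \<Rightarrow> nat \<Rightarrow> nat \<Rightarrow> nat \<Rightarrow> nat \<Rightarrow> nat" where
  "hex_chain_dist c t a x 0 y = hex_pos_dist x y"
| "hex_chain_dist c t a x (Suc b) y = (if Suc b \<le> a then hex_pos_dist x y
     else Suc (hex_chain_dist c t a x b (t (Suc b)) + hex_pos_dist (c (Suc b)) y))"

lemma hex_chain_dist_same: "hex_chain_dist c t a x a y = hex_pos_dist x y"
  by (cases a) auto

lemma hex_chain_dist_last:
  "a < b \<Longrightarrow> hex_chain_dist c t a x b y = Suc (hex_chain_dist c t a x (b-1) (t b) + hex_pos_dist (c b) y)"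
  by (cases b) auto

lemma hex_chain_dist_first:
  "a < b \<Longrightarrow> hex_chain_dist c t a x b y
     = Suc (hex_pos_dist x (t (Suc a)) + hex_chain_dist c t (Suc a) (c (Suc a)) b y)"
proof (induction b arbitrary: y)
  case (Suc b)
  then show ?case by (cases "b = a") (auto simp: hex_chain_dist_same)
qed simp

definition chain_dist :: "(nat \<Rightarrow> nat) \<Rightarrow> (nat \<Rightarrow> nat) \<Rightarrow> nat \<Rightarrow> nat \<Rightarrow> nat" where
  "chain_dist c t u v = (if u div 6 \<le> v div 6
     then hex_chain_dist c t (u div 6) (u mod 6) (v div 6) (v mod 6)
     else hex_chain_dist c t (v div 6) (v mod 6) (u div 6) (u mod 6))"

lemma chain_dist_self [simp]: "chain_dist c t u u = 0"
  by (simp add: chain_dist_def hex_chain_dist_same)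

lemma chain_dist_in_hex [simp]:
  "r < 6 \<Longrightarrow> q < 6 \<Longrightarrow> chain_dist c t (6*b + r) (6*b + q) = hex_pos_dist r q"
  by (simp add: chain_dist_def hex_chain_dist_same)

lemma chain_dist_in_hex_of_source:
  "z < 6 \<Longrightarrow> chain_dist c t u (6 * (u div 6) + z) = hex_pos_dist (u mod 6) z"
  using chain_dist_in_hex[of "u mod 6" z c t "u div 6"] by simp

lemma chain_dist_enter_later:
  assumes "u div 6 < k" "t k < 6" "z < 6"
  shows "chain_dist c t u (6*k + z) = Suc (chain_dist c t u (6*(k-1) + t k) + hex_pos_dist (c k) z)"
proof -
  have "chain_dist c t u (6*k + z) = hex_chain_dist c t (u div 6) (u mod 6) k z"
    using assms by (simp add: chain_dist_def)
  also have "\<dots> = Suc (hex_chain_dist c t (u div 6) (u mod 6) (k-1) (t k) + hex_pos_dist (c k) z)"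
    using assms(1) by (rule hex_chain_dist_last)
  also have "hex_chain_dist c t (u div 6) (u mod 6) (k-1) (t k) = chain_dist c t u (6*(k-1) + t k)"
    using assms by (auto simp: chain_dist_def)
  finally show ?thesis .
qed

lemma chain_dist_enter_earlier:
  assumes "1 \<le> k" "k \<le> u div 6" "c k < 6" "z < 6"
  shows "chain_dist c t u (6*(k-1) + z) = Suc (chain_dist c t u (6*k + c k) + hex_pos_dist (t k) z)"
proof -
  have "chain_dist c t u (6*(k-1) + z) = hex_chain_dist c t (k-1) z (u div 6) (u mod 6)"
    using assms by (auto simp: chain_dist_def)
  also have "\<dots> = Suc (hex_pos_dist z (t k) + hex_chain_dist c t k (c k) (u div 6) (u mod 6))"
    using assms(1,2) hex_chain_dist_first[of "k-1" "u div 6" c t z] by simp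
  also have "hex_chain_dist c t k (c k) (u div 6) (u mod 6) = chain_dist c t u (6*k + c k)"
    using assms by (cases "k = u div 6") (auto simp: chain_dist_def hex_chain_dist_same hex_pos_dist_sym)
  finally show ?thesis by (simp add: hex_pos_dist_sym)
qed

lemma chain_dist_eq_0D:
  assumes "chain_dist c t u v = 0"
  shows "u = v"
proof -
  have "u div 6 = v div 6"
    using assms by (cases "u div 6" "v div 6" rule: linorder_cases)
      (auto simp: chain_dist_def hex_chain_dist_last)
  moreover from this have "u mod 6 = v mod 6"
    using assms by (auto simp: chain_dist_def hex_chain_dist_same intro: hex_pos_dist_eq_0D)
  ultimately show ?thesis by (metis div_mult_mod_eq)
qed

lemma chain_dist_to_hex:
  assumes "valid_chain n c t" "u < 6*n" "b < n"
  obtains e K where "e < 6" "\<And>z. z < 6 \<Longrightarrow> chain_dist c t u (6*b + z) = K + hex_pos_dist e z"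
proof (cases "u div 6" b rule: linorder_cases)
  case less
  then have "t b < 6" using assms valid_chain_less_6[of n c t b] by simp
  with less show ?thesis
    using that[of "c b"] assms valid_chain_less_6[of n c t b] by (simp add: chain_dist_enter_later)
next
  case equal
  show ?thesis by (rule that[of "u mod 6" 0]) (use equal chain_dist_in_hex_of_source in auto)
next
  case greater
  then have "c (Suc b) < 6" using assms valid_chain_less_6[of n c t "Suc b"] by simp
  with greater show ?thesis
    using that[of "t (Suc b)"] assms valid_chain_less_6[of n c t "Suc b"]
      chain_dist_enter_earlier[of "Suc b" u c] by simp
qed

lemma chain_dist_across_cut:
  assumes "valid_chain n c t" "u < 6*n" "1 \<le> k" "k < n"
  shows "chain_dist c t u (6*(k-1) + t k) = Suc (chain_dist c t u (6*k + c k))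
       \<or> chain_dist c t u (6*k + c k) = Suc (chain_dist c t u (6*(k-1) + t k))"
  using assms valid_chain_less_6[OF assms(1,3,4)]
    chain_dist_enter_earlier[of k u c "t k" t] chain_dist_enter_later[of u k t "c k" c]
  by (cases "k \<le> u div 6") simp_all

lemma chain_dist_adj_le:
  assumes vc: "valid_chain n c t" and "u < 6*n" and "chain_adj n c t x y"
  shows "chain_dist c t u y \<le> Suc (chain_dist c t u x)"
  using \<open>chain_adj n c t x y\<close> unfolding chain_adj_iff
proof (elim conjE disjE exE)
  assume xy: "x < 6*n" "y < 6*n" "x div 6 = y div 6" "hex_adj (x mod 6) (y mod 6)"
  have "y div 6 < n" using xy(2) by simp
  then obtain e K where e: "e < 6"
    and dist: "\<And>z. z < 6 \<Longrightarrow> chain_dist c t u (6*(y div 6) + z) = K + hex_pos_dist e z"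
    using chain_dist_to_hex[OF vc \<open>u < 6*n\<close>] by blast
  have "hex_pos_dist e (y mod 6) \<le> Suc (hex_pos_dist e (x mod 6))"
    using hex_pos_dist_adj_le[OF e _ _ xy(4)] by simp
  moreover have "x = 6*(y div 6) + x mod 6" "y = 6*(y div 6) + y mod 6"
    using xy(3) mult_div_mod_eq[of 6 x] mult_div_mod_eq[of 6 y] by simp_all
  ultimately show ?thesis using dist[of "x mod 6"] dist[of "y mod 6"] by simp
next
  fix k assume "1 \<le> k" "k < n" "{x, y} = {6*(k-1) + t k, 6*k + c k}"
  then show ?thesis using chain_dist_across_cut[OF vc \<open>u < 6*n\<close>, of k]
    by (auto simp: doubleton_eq_iff)
qed

lemma chain_dist_pred_in_hex:
  assumes "b < n" "e < 6" "q < 6" "q \<noteq> e"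
    and dist: "\<And>z. z < 6 \<Longrightarrow> chain_dist c t u (6*b + z) = K + hex_pos_dist e z"
  shows "\<exists>y. chain_adj n c t y (6*b + q) \<and> Suc (chain_dist c t u y) = chain_dist c t u (6*b + q)"
proof -
  obtain z where "z < 6" "hex_adj z q" "Suc (hex_pos_dist e z) = hex_pos_dist e q"
    using hex_pos_dist_pred[of e q] assms by auto
  then show ?thesis
    using assms chain_adj_in_hex[of b n z q c t] dist[of z] dist[of q]
    by (intro exI[of _ "6*b + z"]) simp
qed

lemma chain_dist_pred:
  assumes vc: "valid_chain n c t" and "u < 6*n" "v < 6*n" "u \<noteq> v"
  shows "\<exists>y. chain_adj n c t y v \<and> Suc (chain_dist c t u y) = chain_dist c t u v"
proof -
  define b where "b = v div 6"
  define q where "q = v mod 6"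
  have v: "v = 6*b + q" and "b < n" "q < 6" using \<open>v < 6*n\<close> by (simp_all add: b_def q_def)
  consider "u div 6 = b" | "u div 6 < b" | "b < u div 6" by linarith
  then show ?thesis
  proof cases
    case 1
    have "q \<noteq> u mod 6" using 1 \<open>u \<noteq> v\<close> v by (metis mult_div_mod_eq)
    moreover have "chain_dist c t u (6*b + z) = hex_pos_dist (u mod 6) z" if "z < 6" for z
      using chain_dist_in_hex_of_source[OF that, of c t u, unfolded 1] by simp
    ultimately show ?thesis
      unfolding v using \<open>b < n\<close> \<open>q < 6\<close>
      by (intro chain_dist_pred_in_hex[where K = 0 and e = "u mod 6"]) auto
  next
    case 2
    then have "1 \<le> b" by simp
    note less_6 = valid_chain_less_6[OF vc this \<open>b < n\<close>]
    have enter: "chain_dist c t u (6*b + z)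
        = Suc (chain_dist c t u (6*(b-1) + t b) + hex_pos_dist (c b) z)" if "z < 6" for z
      using chain_dist_enter_later[of u b t z c] 2 less_6 that by simp
    show ?thesis
    proof (cases "q = c b")
      case True
      then show ?thesis
        unfolding v using chain_adj_cut(1)[of b n t c, OF \<open>1 \<le> b\<close> \<open>b < n\<close> less_6(2,1)]
          enter[OF \<open>q < 6\<close>] by auto
    next
      case False
      then show ?thesis
        unfolding v using enter less_6 \<open>b < n\<close> \<open>q < 6\<close>
        by (intro chain_dist_pred_in_hex[where K = "Suc (chain_dist c t u (6*(b-1) + t b))"]) auto
    qed
  next
    case 3
    then have "1 \<le> Suc b" "Suc b < n" using \<open>u < 6*n\<close> by auto
    note less_6 = valid_chain_less_6[OF vc this]
    have enter: "chain_dist c t u (6*b + z)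
        = Suc (chain_dist c t u (6*Suc b + c (Suc b)) + hex_pos_dist (t (Suc b)) z)" if "z < 6" for z
      using chain_dist_enter_earlier[of "Suc b" u c z t] 3 less_6 that by simp
    show ?thesis
    proof (cases "q = t (Suc b)")
      case True
      then show ?thesis
        unfolding v using chain_adj_cut(2)[of "Suc b" n t c, OF \<open>1 \<le> Suc b\<close> \<open>Suc b < n\<close> less_6(2,1)]
          enter[OF \<open>q < 6\<close>] by auto
    next
      case False
      then show ?thesis
        unfolding v using enter less_6 \<open>b < n\<close> \<open>q < 6\<close>
        by (intro chain_dist_pred_in_hex[where K = "Suc (chain_dist c t u (6*Suc b + c (Suc b)))"]) auto
    qed
  qed
qed

lemma graph_dist_chain:
  assumes vc: "valid_chain n c t" and "u < 6*n" "v < 6*n"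
  shows "graph_dist (chain_adj n c t) u v = chain_dist c t u v"
proof (rule graph_dist_eqI[where V = "{..<6*n}"])
  show "chain_dist c t u y \<le> Suc (chain_dist c t u x)" if "chain_adj n c t x y" for x y
    using chain_dist_adj_le[OF vc \<open>u < 6*n\<close> that] .
  show "\<exists>x\<in>{..<6*n}. chain_adj n c t x w \<and> Suc (chain_dist c t u x) = chain_dist c t u w"
    if w: "w \<in> {..<6*n}" "0 < chain_dist c t u w" for w
  proof -
    have "u \<noteq> w" using w(2) by auto
    then obtain x where "chain_adj n c t x w" "Suc (chain_dist c t u x) = chain_dist c t u w"
      using chain_dist_pred[OF vc \<open>u < 6*n\<close>] w(1) by auto
    moreover from this(1) have "x \<in> {..<6*n}" by (simp add: chain_adj_iff)
    ultimately show ?thesis by blast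
  qed
qed (use \<open>v < 6*n\<close> chain_dist_eq_0D in auto)

section \<open>Summing the distances\<close>

lemma sum_pairs_less:
  "(\<Sum>(u, v) \<in> {(u, v). u < v \<and> v < (N::nat)}. f u v) = (\<Sum>v<N. \<Sum>u<v. f u v)"
proof -
  have "{(u, v). u < v \<and> v < N} = prod.swap ` (SIGMA v:{..<N}. {..<v})" by auto
  then show ?thesis by (simp add: sum.reindex sum.Sigma)
qed

lemma sum_lessThan_add: "(\<Sum>v<a + b. f v) = (\<Sum>v<a. f v) + (\<Sum>v<b. f (a + v))"
  for a b :: nat
  by (induction b) (simp_all add: add.assoc)

definition partial_wiener :: "(nat \<Rightarrow> nat) \<Rightarrow> (nat \<Rightarrow> nat) \<Rightarrow> nat \<Rightarrow> nat" where
  "partial_wiener c t m = (\<Sum>v<6*m. \<Sum>u<v. chain_dist c t u v)"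

definition attach_dist_sum :: "(nat \<Rightarrow> nat) \<Rightarrow> (nat \<Rightarrow> nat) \<Rightarrow> nat \<Rightarrow> nat" where
  "attach_dist_sum c t m = (\<Sum>u<6*m. chain_dist c t u (6*(m-1) + t m))"

lemma wiener_eq_partial_wiener:
  assumes "valid_chain n c t"
  shows "wiener n c t = partial_wiener c t n"
proof -
  have "wiener n c t = (\<Sum>(u, v) \<in> {(u, v). u < v \<and> v < 6*n}. chain_dist c t u v)"
    unfolding wiener_def by (rule sum.cong) (auto simp: graph_dist_chain[OF assms])
  then show ?thesis by (simp add: sum_pairs_less partial_wiener_def)
qed

lemma sum_dist_to_next_hex:
  assumes "1 \<le> m" "t m < 6" "z < 6"
  shows "(\<Sum>u<6*m. chain_dist c t u (6*m + z))
    = attach_dist_sum c t m + 6*m * Suc (hex_pos_dist (c m) z)"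
proof -
  have "(\<Sum>u<6*m. chain_dist c t u (6*m + z))
      = (\<Sum>u<6*m. chain_dist c t u (6*(m-1) + t m) + Suc (hex_pos_dist (c m) z))"
    using assms by (intro sum.cong) (auto simp: chain_dist_enter_later)
  also have "\<dots> = attach_dist_sum c t m + 6*m * Suc (hex_pos_dist (c m) z)"
    by (simp only: sum.distrib) (simp add: attach_dist_sum_def)
  finally show ?thesis .
qed

lemma attach_dist_sum_1: "t 1 < 6 \<Longrightarrow> attach_dist_sum c t 1 = 9"
  using chain_dist_in_hex[of _ "t 1" c t 0] sum_hex_pos_dist[of "t 1"]
  by (simp add: attach_dist_sum_def hex_pos_dist_sym)

lemma attach_dist_sum_Suc:
  assumes "1 \<le> m" "t m < 6" "t (Suc m) < 6"
  shows "attach_dist_sum c t (Suc m) = attach_dist_sum c t m + 6*m * Suc (hex_pos_dist (c m) (t (Suc m))) + 9"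
proof -
  have "attach_dist_sum c t (Suc m) = (\<Sum>u<6*m + 6. chain_dist c t u (6*m + t (Suc m)))"
    by (simp add: attach_dist_sum_def add.commute)
  also have "\<dots> = (\<Sum>u<6*m. chain_dist c t u (6*m + t (Suc m)))
      + (\<Sum>r<6. chain_dist c t (6*m + r) (6*m + t (Suc m)))"
    by (rule sum_lessThan_add)
  also have "(\<Sum>r<6. chain_dist c t (6*m + r) (6*m + t (Suc m))) = 9"
    using assms(3) sum_hex_pos_dist[of "t (Suc m)"] by (simp add: hex_pos_dist_sym)
  finally show ?thesis using sum_dist_to_next_hex[of m t "t (Suc m)" c, OF assms(1,2,3)] by simp
qed

lemma partial_wiener_Suc:
  assumes "1 \<le> m" "t m < 6" "c m < 6"
  shows "partial_wiener c t (Suc m) = partial_wiener c t m + 6 * attach_dist_sum c t m + 90*m + 27"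
proof -
  have "partial_wiener c t (Suc m) = (\<Sum>v<6*m + 6. \<Sum>u<v. chain_dist c t u v)"
    by (simp add: partial_wiener_def add.commute)
  also have "\<dots> = partial_wiener c t m + (\<Sum>q<6. \<Sum>u<6*m + q. chain_dist c t u (6*m + q))"
    unfolding partial_wiener_def by (rule sum_lessThan_add)
  also have "(\<Sum>q<6. \<Sum>u<6*m + q. chain_dist c t u (6*m + q))
      = (\<Sum>q<6. attach_dist_sum c t m + 6*m * Suc (hex_pos_dist (c m) q) + (\<Sum>r<q. hex_pos_dist r q))"
    using assms by (intro sum.cong) (simp_all add: sum_lessThan_add sum_dist_to_next_hex)
  also have "\<dots> = 6 * attach_dist_sum c t m + 36*m + 6*m * (\<Sum>q<6. hex_pos_dist (c m) q) + 27"
    by (simp add: sum.distrib sum_distrib_left sum_hex_pos_dist_pairs)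
  finally show ?thesis using sum_hex_pos_dist[OF assms(3)] by simp
qed

lemma partial_wiener_1: "partial_wiener c t 1 = 27"
proof -
  have "partial_wiener c t 1 = (\<Sum>v<6. \<Sum>u<v. chain_dist c t (6*0 + u) (6*0 + v))"
    by (simp add: partial_wiener_def)
  also have "\<dots> = (\<Sum>v<6. \<Sum>u<v. hex_pos_dist u v)"
    using chain_dist_in_hex[of _ _ c t 0] by (intro sum.cong) auto
  finally show ?thesis by (simp add: sum_hex_pos_dist_pairs)
qed

lemma attach_dist_sum_closed:
  assumes vc: "valid_chain n c t" and type: "chain_type d n c t" and "1 \<le> m" "m < n"
  shows "int (attach_dist_sum c t m) = 9 * int m + 3 * (int d + 1) * int m * (int m - 1)"
  using assms(3,4)
proof (induction m rule: dec_induct)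
  case base
  then show ?case using attach_dist_sum_1 valid_chain_less_6(2)[OF vc] by simp
next
  case (step m)
  have "2 \<le> Suc m \<and> Suc m < n" using step.hyps(1) step.prems by simp
  then have "hex_pos_dist (t (Suc m)) (c (Suc m - 1)) = d"
    using type unfolding chain_type_def by blast
  moreover have "t m < 6" "t (Suc m) < 6"
    using valid_chain_less_6(2)[OF vc] step.hyps(1) step.prems by simp_all
  ultimately show ?case
    using attach_dist_sum_Suc[OF step.hyps(1), of t c] step by (simp add: hex_pos_dist_sym algebra_simps)
qed

lemma partial_wiener_closed:
  assumes vc: "valid_chain n c t" and type: "chain_type d n c t" and "m \<le> n"
  shows "int (partial_wiener c t m)
    = 27 * int m + 72 * int m * (int m - 1) + 6 * (int d + 1) * int m * (int m - 1) * (int m - 2)"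
  using \<open>m \<le> n\<close>
proof (induction m)
  case 0
  then show ?case by (simp add: partial_wiener_def)
next
  case (Suc m)
  show ?case
  proof (cases "m = 0")
    case True
    then show ?thesis using partial_wiener_1 by simp
  next
    case False
    then have "1 \<le> m" "m < n" using Suc.prems by simp_all
    then show ?thesis
      using partial_wiener_Suc[of m t c, OF \<open>1 \<le> m\<close> valid_chain_less_6(2,1)[OF vc \<open>1 \<le> m\<close> \<open>m < n\<close>]]
        Suc attach_dist_sum_closed[OF vc type \<open>1 \<le> m\<close> \<open>m < n\<close>]
      by (simp add: algebra_simps)
  qed
qed

theorem corollary3p3:
  fixes n :: nat and c t :: "nat \<Rightarrow> nat"
  assumes "n \<ge> 1" and "valid_chain n c t"
  shows "(chain_type 1 n c t \<longrightarrow>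
            int (wiener n c t) = 12 * int n ^ 3 + 36 * int n ^ 2 - 21 * int n)
       \<and> (chain_type 2 n c t \<longrightarrow>
            int (wiener n c t) = 18 * int n ^ 3 + 18 * int n ^ 2 - 9 * int n)
       \<and> (chain_type 3 n c t \<longrightarrow>
            int (wiener n c t) = 24 * int n ^ 3 + 3 * int n)"
proof -
  have closed: "int (wiener n c t)
      = 27 * int n + 72 * int n * (int n - 1) + 6 * (int d + 1) * int n * (int n - 1) * (int n - 2)"
    if "chain_type d n c t" for d
    using wiener_eq_partial_wiener[OF assms(2)] partial_wiener_closed[OF assms(2) that order.refl]
    by simp
  show ?thesis
    using closed[of 1] closed[of 2] closed[of 3] by (simp add: power2_eq_square power3_eq_cube algebra_simps)
qed

end
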